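(* For any integers $p\geq3$, $k\geq1$, there exists $\lambda^{(2)}=\lambda^{(2)}(p,k)>0$ such that, for every $\lambda>0$ for which $m_*(\lambda)$ is defined, $m_*(\lambda)<m_\lambda$ if $\lambda<\lambda^{(2)}$ and $m_*(\lambda)\geq m_\lambda$ if $\lambda\geq\lambda^{(2)}$.
   Context: For $\lambda>0$: $m_\lambda=\min\left\{1,\left(\frac{(p-2)\sqrt p}{\lambda\sqrt{p-1}}\right)^{1/k}\right\}$, and $m_*(\lambda)$ is the largest solution $m\in(0,1]$ of $\frac{\lambda m^k}{\sqrt p}=\frac{m^2}{\sqrt{1-m^2}}$ (when such a solution exists). *)

theory Defs
  imports Complex_Main
begin

definition m_lam :: "nat \<Rightarrow> nat \<Rightarrow> real \<Rightarrow> real" where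
  "m_lam p k lam = min 1
     ((((real p - 2) * sqrt (real p)) / (lam * sqrt (real p - 1))) powr (1 / real k))"

text \<open>Solutions m in (0,1] of  lambda m^k / sqrt p = m^2 / sqrt(1 - m^2).
  The right-hand side is undefined (infinite) at m = 1, so m = 1 is never a solution;
  we therefore restrict to 0 < m < 1.\<close>
definition mstar_sols :: "nat \<Rightarrow> nat \<Rightarrow> real \<Rightarrow> real set" where
  "mstar_sols p k lam = {m. 0 < m \<and> m < 1 \<and>
      lam * m ^ k / sqrt (real p) = m ^ 2 / sqrt (1 - m ^ 2)}"

definition mstar_defined :: "nat \<Rightarrow> nat \<Rightarrow> real \<Rightarrow> bool" where
  "mstar_defined p k lam =
     (\<exists>m \<in> mstar_sols p k lam. \<forall>m' \<in> mstar_sols p k lam. m' \<le> m)"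

definition mstar :: "nat \<Rightarrow> nat \<Rightarrow> real \<Rightarrow> real" where
  "mstar p k lam = (GREATEST m. m \<in> mstar_sols p k lam)"

end

theory Submission
  imports Defs
begin

text \<open>Write x = m^2. The equation defining m_* becomes lam^2 x^(k-2) (1 - x) = p, and at a
  solution m the comparison m_lam \<le> m reduces to x \<ge> (p - 2)/(p - 1), because
  m^2 / sqrt (1 - m^2) is increasing. On [(p - 2)/(p - 1), 1) the function x^(k-2) (1 - x)
  attains its maximum h at y = (q - 2)/(q - 1), q = max p k; take lam2 = sqrt (p / h).
  For lam < lam2 no solution can lie above the threshold, while for lam \<ge> lam2 the
  intermediate value theorem on [y, 1] produces one, and m_* is at least as large.\<close>

definition hump :: "real \<Rightarrow> real \<Rightarrow> real" where
  "hump a x = x powr a * (1 - x)"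

lemma hump_pos: "0 < x \<Longrightarrow> x < 1 \<Longrightarrow> 0 < hump a x"
  by (simp add: hump_def)

lemma has_real_derivative_hump:
  assumes "0 < x"
  shows "(hump a has_real_derivative x powr (a - 1) * (a - (a + 1) * x)) (at x)"
proof -
  have "(hump a has_real_derivative a * x powr (a - 1) * (1 - x) - x powr a) (at x)"
    unfolding hump_def[abs_def] using assms
    by (auto intro!: derivative_eq_intros)
  moreover have "x powr a = x * x powr (a - 1)"
    using assms by (simp add: powr_diff)
  ultimately show ?thesis by (simp add: algebra_simps)
qed

lemma hump_antimono:
  assumes "-1 \<le> a" "0 < t" "a \<le> (a + 1) * t" "t \<le> x"
  shows "hump a x \<le> hump a t"
proof (rule DERIV_nonpos_imp_nonincreasing[OF \<open>t \<le> x\<close>])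
  fix s assume s: "t \<le> s" "s \<le> x"
  have "a \<le> (a + 1) * s"
    using assms s mult_left_mono[of t s "a + 1"] by linarith
  then have "s powr (a - 1) * (a - (a + 1) * s) \<le> 0"
    by (simp add: mult_nonneg_nonpos)
  then show "\<exists>y. (hump a has_real_derivative y) (at s) \<and> y \<le> 0"
    using has_real_derivative_hump[of s a] assms(2) s(1) by fastforce
qed

lemma hump_mono:
  assumes "-1 \<le> a" "0 < x" "x \<le> t" "(a + 1) * t \<le> a"
  shows "hump a x \<le> hump a t"
proof (rule DERIV_nonneg_imp_nondecreasing[OF \<open>x \<le> t\<close>])
  fix s assume s: "x \<le> s" "s \<le> t"
  have "(a + 1) * s \<le> a"
    using assms s mult_left_mono[of s t "a + 1"] by linarith
  then have "0 \<le> s powr (a - 1) * (a - (a + 1) * s)"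
    by simp
  then show "\<exists>y. (hump a has_real_derivative y) (at s) \<and> 0 \<le> y"
    using has_real_derivative_hump[of s a] assms(2) s(1) by fastforce
qed

lemma hump_le_critical:
  assumes "0 < a" "0 < x"
  shows "hump a x \<le> hump a (a / (a + 1))"
proof (cases "x \<le> a / (a + 1)")
  case True
  then show ?thesis using assms by (intro hump_mono) auto
next
  case False
  then show ?thesis using assms by (intro hump_antimono) auto
qed

text \<open>The maximiser of hump (k - 2) on [(p - 2)/(p - 1), 1): the critical point
  (k - 2)/(k - 1) when k > p, the left endpoint otherwise.\<close>
definition hump_argmax :: "real \<Rightarrow> real \<Rightarrow> real" where
  "hump_argmax p k = (max p k - 2) / (max p k - 1)"

lemma hump_argmax_bounds:
  fixes p k :: real
  assumes "2 < p"
  shows "0 < hump_argmax p k" "hump_argmax p k < 1"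
    and "(p - 2) / (p - 1) \<le> hump_argmax p k"
  using assms by (auto simp: hump_argmax_def max_def field_simps)

lemma hump_le_hump_argmax:
  fixes p k x :: real
  assumes "2 < p" "1 \<le> k" "(p - 2) / (p - 1) \<le> x"
  shows "hump (k - 2) x \<le> hump (k - 2) (hump_argmax p k)"
proof (cases "k \<le> p")
  case True
  have "0 < (p - 2) / (p - 1)" and "k - 2 \<le> (k - 2 + 1) * ((p - 2) / (p - 1))"
    using assms True by (simp_all add: field_simps)
  then show ?thesis
    using assms True by (simp add: hump_argmax_def max_def hump_antimono)
next
  case False
  have "(k - 2) / (k - 2 + 1) = hump_argmax p k"
    using False by (simp add: hump_argmax_def max_def)
  moreover have "0 < x"
    using assms by (smt (verit) divide_pos_pos)
  ultimately show ?thesis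
    using hump_le_critical[of "k - 2" x] assms False by simp
qed

lemma mstar_sols_iff_hump:
  assumes "0 < lam" "0 < p"
  shows "m \<in> mstar_sols p k lam \<longleftrightarrow>
           0 < m \<and> m < 1 \<and> lam\<^sup>2 * hump (real k - 2) (m\<^sup>2) = real p"
proof (cases "0 < m \<and> m < 1")
  case True
  then have m2: "0 < m\<^sup>2" "m\<^sup>2 < 1"
    by (simp_all add: power_less_one_iff)
  have "lam * m ^ k / sqrt p = m\<^sup>2 / sqrt (1 - m\<^sup>2) \<longleftrightarrow> lam * m ^ k * sqrt (1 - m\<^sup>2) = sqrt p * m\<^sup>2"
    using assms m2 by (simp add: field_simps)
  also have "\<dots> \<longleftrightarrow> (lam * m ^ k * sqrt (1 - m\<^sup>2))\<^sup>2 = (sqrt p * m\<^sup>2)\<^sup>2"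
    using assms True m2 by (simp add: power2_eq_iff_nonneg)
  also have "\<dots> \<longleftrightarrow> lam\<^sup>2 * (m\<^sup>2) ^ k * (1 - m\<^sup>2) = p * (m\<^sup>2)\<^sup>2"
    using m2 by (simp add: power_mult_distrib power_mult[symmetric] mult.commute)
  also have "\<dots> \<longleftrightarrow> lam\<^sup>2 * hump (real k - 2) (m\<^sup>2) = p"
    using m2 by (simp add: hump_def powr_diff powr_realpow field_simps)
  finally show ?thesis
    using True by (simp add: mstar_sols_def)
qed (auto simp: mstar_sols_def)

lemma strict_mono_on_sq_div_sqrt: "strict_mono_on {0..<1} (\<lambda>m::real. m\<^sup>2 / sqrt (1 - m\<^sup>2))"
proof (rule strict_mono_onI)
  fix a b :: real
  assume "a \<in> {0..<1}" "b \<in> {0..<1}" "a < b"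
  then have "a\<^sup>2 < b\<^sup>2" "0 < sqrt (1 - b\<^sup>2)" "sqrt (1 - b\<^sup>2) \<le> sqrt (1 - a\<^sup>2)"
    by (auto intro: power_strict_mono simp: power_less_one_iff power_mono)
  then show "a\<^sup>2 / sqrt (1 - a\<^sup>2) < b\<^sup>2 / sqrt (1 - b\<^sup>2)"
    by (meson frac_less zero_le_power2)
qed

lemma m_lam_le_iff:
  assumes "2 < p" "0 < lam" "1 \<le> k" "0 < m" "m < 1"
  shows "m_lam p k lam \<le> m \<longleftrightarrow> (real p - 2) * sqrt p / sqrt (real p - 1) \<le> lam * m ^ k"
proof -
  define z where "z = (real p - 2) * sqrt p / (lam * sqrt (real p - 1))"
  have "0 < z"
    using assms by (simp add: z_def)
  then have "m_lam p k lam = min 1 (root k z)"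
    using assms by (simp add: m_lam_def z_def root_powr_inverse)
  then have "m_lam p k lam \<le> m \<longleftrightarrow> root k z \<le> m"
    using assms by (simp add: min_le_iff_disj)
  also have "\<dots> \<longleftrightarrow> root k z \<le> root k (m ^ k)"
    using assms by (simp add: real_root_power_cancel)
  also have "\<dots> \<longleftrightarrow> z \<le> m ^ k"
    using assms by simp
  also have "\<dots> \<longleftrightarrow> (real p - 2) * sqrt p / sqrt (real p - 1) \<le> lam * m ^ k"
    using assms by (simp add: z_def field_simps)
  finally show ?thesis .
qed

lemma m_lam_le_sol_iff:
  assumes "2 < p" "0 < lam" "1 \<le> k" "m \<in> mstar_sols p k lam"
  shows "m_lam p k lam \<le> m \<longleftrightarrow> sqrt ((real p - 2) / (real p - 1)) \<le> m"
proof -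
  define G where "G = (\<lambda>m::real. m\<^sup>2 / sqrt (1 - m\<^sup>2))"
  define m0 where "m0 = sqrt ((real p - 2) / (real p - 1))"
  have m: "0 < m" "m < 1" and sol: "lam * m ^ k = sqrt p * G m"
    using assms by (auto simp: mstar_sols_def G_def field_simps)
  have m0: "0 \<le> m0" "m0 < 1"
    using assms by (auto simp: m0_def)
  have "sqrt p * G m0 = (real p - 2) * sqrt p / sqrt (real p - 1)"
    using assms by (simp add: G_def m0_def field_simps real_sqrt_divide)
  then have "m_lam p k lam \<le> m \<longleftrightarrow> sqrt p * G m0 \<le> sqrt p * G m"
    using m_lam_le_iff[OF assms(1-3) m] sol by simp
  also have "\<dots> \<longleftrightarrow> G m0 \<le> G m"
    using assms by simp
  also have "\<dots> \<longleftrightarrow> m0 \<le> m"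
    using m m0 strict_mono_on_less_eq[OF strict_mono_on_sq_div_sqrt, of m0 m]
    by (simp add: G_def)
  finally show ?thesis
    by (simp add: m0_def)
qed

lemma ex_mstar_sol_ge_sqrt:
  assumes "0 < lam" "0 < p" "0 < y" "y < 1" "p \<le> lam\<^sup>2 * hump (real k - 2) y"
  shows "\<exists>m \<in> mstar_sols p k lam. sqrt y \<le> m"
proof -
  have "continuous_on {y..1} (\<lambda>x. lam\<^sup>2 * hump (real k - 2) x)"
    using assms unfolding hump_def by (intro continuous_intros) auto
  moreover have "lam\<^sup>2 * hump (real k - 2) 1 \<le> p"
    by (simp add: hump_def)
  ultimately obtain x where x: "y \<le> x" "x \<le> 1" "lam\<^sup>2 * hump (real k - 2) x = p"
    using IVT2'[of "\<lambda>x. lam\<^sup>2 * hump (real k - 2) x" 1 p y] assms by auto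
  then have "x \<noteq> 1"
    using assms by (auto simp: hump_def)
  then have "sqrt x \<in> mstar_sols p k lam"
    using x assms by (simp add: mstar_sols_iff_hump)
  moreover have "sqrt y \<le> sqrt x"
    using x by simp
  ultimately show ?thesis ..
qed

lemma mstar_greatest:
  assumes "mstar_defined p k lam"
  shows "mstar p k lam \<in> mstar_sols p k lam"
    and "m \<in> mstar_sols p k lam \<Longrightarrow> m \<le> mstar p k lam"
proof -
  obtain ms where "ms \<in> mstar_sols p k lam" "\<forall>m \<in> mstar_sols p k lam. m \<le> ms"
    using assms unfolding mstar_defined_def by blast
  moreover from this have "mstar p k lam = ms"
    unfolding mstar_def by (intro Greatest_equality) auto
  ultimately show "mstar p k lam \<in> mstar_sols p k lam"
    and "m \<in> mstar_sols p k lam \<Longrightarrow> m \<le> mstar p k lam"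
    by auto
qed

definition lam_crit :: "nat \<Rightarrow> nat \<Rightarrow> real" where
  "lam_crit p k = sqrt (p / hump (real k - 2) (hump_argmax (real p) (real k)))"

lemma lam_crit_pos:
  assumes "3 \<le> p"
  shows "0 < lam_crit p k"
  using hump_pos hump_argmax_bounds[of "real p" "real k"] assms by (simp add: lam_crit_def)

lemma lam_crit_sq:
  assumes "3 \<le> p"
  shows "(lam_crit p k)\<^sup>2 * hump (real k - 2) (hump_argmax (real p) (real k)) = p"
proof -
  have "0 < hump (real k - 2) (hump_argmax (real p) (real k))"
    using hump_pos hump_argmax_bounds[of "real p" "real k"] assms by simp
  then show ?thesis
    by (simp add: lam_crit_def)
qed

lemma lam_crit_le_if_m_lam_le_sol:
  assumes "3 \<le> p" "1 \<le> k" "0 < lam" "m \<in> mstar_sols p k lam" "m_lam p k lam \<le> m"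
  shows "lam_crit p k \<le> lam"
proof -
  let ?h = "hump (real k - 2)" and ?y = "hump_argmax (real p) (real k)"
  have "(real p - 2) / (real p - 1) \<le> m\<^sup>2"
    using m_lam_le_sol_iff[of p lam k m] assms by (simp add: sqrt_le_D)
  then have "?h (m\<^sup>2) \<le> ?h ?y"
    using hump_le_hump_argmax[of p k "m\<^sup>2"] assms by simp
  moreover have "lam\<^sup>2 * ?h (m\<^sup>2) = p"
    using assms by (simp add: mstar_sols_iff_hump)
  ultimately have "(lam_crit p k)\<^sup>2 * ?h ?y \<le> lam\<^sup>2 * ?h ?y"
    using lam_crit_sq[OF assms(1)] by (metis mult_left_mono zero_le_power2)
  then have "(lam_crit p k)\<^sup>2 \<le> lam\<^sup>2"
    using hump_pos hump_argmax_bounds[of "real p" "real k"] assms by (simp add: mult_le_cancel_right_pos)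
  then show ?thesis
    using power2_le_imp_le[of "lam_crit p k" lam] assms(3) by simp
qed

lemma ex_sol_ge_m_lam_if_lam_crit_le:
  assumes "3 \<le> p" "1 \<le> k" "0 < lam" "lam_crit p k \<le> lam"
  shows "\<exists>m \<in> mstar_sols p k lam. m_lam p k lam \<le> m"
proof -
  let ?y = "hump_argmax (real p) (real k)"
  have y: "0 < ?y" "?y < 1" "(real p - 2) / (real p - 1) \<le> ?y"
    using hump_argmax_bounds[of "real p" "real k"] assms by auto
  have sq: "(lam_crit p k)\<^sup>2 \<le> lam\<^sup>2"
    using power_mono[OF assms(4), of 2] lam_crit_pos[OF assms(1), of k] by simp
  have "p \<le> lam\<^sup>2 * hump (real k - 2) ?y"
    using mult_right_mono[OF sq, of "hump (real k - 2) ?y"] lam_crit_sq[OF assms(1), of k]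
      hump_pos[OF y(1,2), of "real k - 2"]
    by simp
  then obtain m where m: "m \<in> mstar_sols p k lam" "sqrt ?y \<le> m"
    using ex_mstar_sol_ge_sqrt[OF assms(3) _ y(1,2), where p = p and k = k] assms by auto
  then have "sqrt ((real p - 2) / (real p - 1)) \<le> m"
    using y(3) by (meson order.trans real_sqrt_le_iff)
  then show ?thesis
    using m_lam_le_sol_iff[of p lam k m] m assms by auto
qed

theorem lemmaB2:
  fixes p k :: nat
  assumes "p \<ge> 3" and "k \<ge> 1"
  shows "\<exists>lam2 > 0. \<forall>lam > 0. mstar_defined p k lam \<longrightarrow>
           ((lam < lam2 \<longrightarrow> mstar p k lam < m_lam p k lam) \<and>
            (lam \<ge> lam2 \<longrightarrow> mstar p k lam \<ge> m_lam p k lam))"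
proof (intro exI[of _ "lam_crit p k"] conjI allI impI)
  show "0 < lam_crit p k"
    by (rule lam_crit_pos[OF assms(1)])
  fix lam :: real
  assume lam: "0 < lam" "mstar_defined p k lam"
  note mstar = mstar_greatest[OF lam(2)]
  show "mstar p k lam < m_lam p k lam" if "lam < lam_crit p k"
    using lam_crit_le_if_m_lam_le_sol[OF assms lam(1) mstar(1)] that by fastforce
  show "m_lam p k lam \<le> mstar p k lam" if "lam_crit p k \<le> lam"
    using ex_sol_ge_m_lam_if_lam_crit_le[OF assms lam(1) that] mstar(2) by fastforce
qed

end
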